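(* Let $(G_1,s_1,t_1)$ and $(G_2,s_2,t_2)$ be TTSPGs, $L_1=(G_1,l_1)$, $L_2=(G_2,l_2)$ linkages, $(G,s_2,t_1)=(G_1,s_1,t_1)\circ(G_2,s_2,t_2)$, and $L=(G,l)$ with $l$ restricting to $l_1$ on edges from $G_1$ and to $l_2$ on edges from $G_2$. Suppose $M(L)\neq\emptyset$. Then $M(L)$ is connected if and only if both $M(L_1)$ and $M(L_2)$ are connected.
   Context: A graph has a finite vertex set and a finite multiset of edges that are unordered pairs of distinct vertices. A linkage is $L=(G,l)$ with $l:E\to\mathbb R_{\ge0}$; $C(L)=\{p:V\to\mathbb R^2:|p(u)-p(v)|=l(\{u,v\})\ \forall\{u,v\}\in E\}\subseteq\mathbb R^{2|V|}$, and $M(L)$ is the quotient of $C(L)$ by the group of orientation preserving isometries of $\mathbb R^2$ (quotient topology). TTG: $(G,s,t)$ with $s\ne t$; series composition $(G_1,s_1,t_1)\circ(G_2,s_2,t_2)=(G_1\cup_{t_2\sim s_1}G_2,s_2,t_1)$ (disjoint union with $t_2$ identified to $s_1$); parallel composition $(G_1,s_1,t_1)\|(G_2,s_2,t_2)=(G_1\cup_{s_1\sim s_2,t_1\sim t_2}G_2,s_1,t_1)$. TTSPGs: the smallest class of TTGs containing a single edge $(K_2,s,t)$ and closed under both compositions. *)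

theory Defs
  imports "HOL-Analysis.Analysis"
begin

(* A graph is given by a finite vertex set V, a set E of edge names and an
   endpoint map ends; distinct edge names with the same endpoints model
   parallel edges (multiset of edges).  The plane R^2 is identified with C. *)

(* Two-terminal series-parallel graphs (sub-TTGs living inside a common
   vertex type 'v / edge type 'e; compositions are disjoint unions with the
   prescribed identifications). *)
inductive ttspg :: "'v set \<Rightarrow> 'e set \<Rightarrow> ('e \<Rightarrow> 'v \<times> 'v) \<Rightarrow> 'v \<Rightarrow> 'v \<Rightarrow> bool" where
  edge: "s \<noteq> t \<Longrightarrow> ends e \<in> {(s, t), (t, s)} \<Longrightarrow> ttspg {s, t} {e} ends s t"
| series: "ttspg V1 E1 ends s1 t1 \<Longrightarrow> ttspg V2 E2 ends s2 t2 \<Longrightarrow>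
     V1 \<inter> V2 = {s1} \<Longrightarrow> t2 = s1 \<Longrightarrow> E1 \<inter> E2 = {} \<Longrightarrow>
     ttspg (V1 \<union> V2) (E1 \<union> E2) ends s2 t1"
| parallel: "ttspg V1 E1 ends s1 t1 \<Longrightarrow> ttspg V2 E2 ends s2 t2 \<Longrightarrow>
     V1 \<inter> V2 = {s1, t1} \<Longrightarrow> s2 = s1 \<Longrightarrow> t2 = t1 \<Longrightarrow> E1 \<inter> E2 = {} \<Longrightarrow>
     ttspg (V1 \<union> V2) (E1 \<union> E2) ends s1 t1"

definition conf :: "'v set \<Rightarrow> 'e set \<Rightarrow> ('e \<Rightarrow> 'v \<times> 'v) \<Rightarrow> ('e \<Rightarrow> real) \<Rightarrow> ('v \<Rightarrow> complex) set" where
  "conf V E ends l = {p \<in> PiE V (\<lambda>_. UNIV).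
      \<forall>e\<in>E. cmod (p (fst (ends e)) - p (snd (ends e))) = l e}"

definition isom_rel :: "'v set \<Rightarrow> ('v \<Rightarrow> complex) set \<Rightarrow> (('v \<Rightarrow> complex) \<times> ('v \<Rightarrow> complex)) set" where
  "isom_rel V C = {(p, q). p \<in> C \<and> q \<in> C \<and>
      (\<exists>a b. cmod a = 1 \<and> (\<forall>v\<in>V. q v = a * p v + b))}"

definition quotient_topology :: "'a topology \<Rightarrow> ('a \<times> 'a) set \<Rightarrow> 'a set topology" where
  "quotient_topology X R = topology (\<lambda>U. U \<subseteq> topspace X // R \<and> openin X (\<Union>U))"

definition moduli :: "'v set \<Rightarrow> 'e set \<Rightarrow> ('e \<Rightarrow> 'v \<times> 'v) \<Rightarrow> ('e \<Rightarrow> real) \<Rightarrow> ('v \<Rightarrow> complex) set topology" where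
  "moduli V E ends l = quotient_topology (top_of_set (conf V E ends l)) (isom_rel V (conf V E ends l))"

end

theory Submission
  imports Defs
begin

(* The orbits of the isometry action on the configuration space
   C(L) are continuous images of the connected space S^1 x C, so C(L) -> M(L)
   is a quotient map with connected fibres; hence M(L) is connected iff C(L) is
   (lemma moduli_connected_iff_conf_connected).  The theorem thus reduces to
   configuration spaces.  A series composition glues G1 and G2 at the single
   cut vertex s1.  Restriction to V1 resp. V2 maps C(L) continuously onto C(L1)
   resp. C(L2); conversely, translating a configuration of G1 so that it meets
   a configuration of G2 at the cut vertex gives a continuous map
   C(L1) x C(L2) -> C(L) onto C(L) (lemma conf_glue_connected_iff). *)

section \<open>Quotient topologies with connected classes\<close>

lemma openin_quotient_topology:
  assumes eq: "equiv (topspace X) R"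
  shows "openin (quotient_topology X R) = (\<lambda>U. U \<subseteq> topspace X // R \<and> openin X (\<Union>U))"
  unfolding quotient_topology_def
proof (rule topology_inverse')
  have inter: "S \<inter> T \<subseteq> topspace X // R \<and> openin X (\<Union>(S \<inter> T))"
    if S: "S \<subseteq> topspace X // R \<and> openin X (\<Union>S)"
      and T: "T \<subseteq> topspace X // R \<and> openin X (\<Union>T)" for S T
  proof -
    \<comment> \<open>distinct equivalence classes are disjoint, so unions commute with intersection\<close>
    have "\<Union>(S \<inter> T) = \<Union>S \<inter> \<Union>T"
    proof
      show "\<Union>S \<inter> \<Union>T \<subseteq> \<Union>(S \<inter> T)"
      proof
        fix x assume "x \<in> \<Union>S \<inter> \<Union>T"
        then obtain a b where "a \<in> S" "b \<in> T" "x \<in> a" "x \<in> b" by auto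
        moreover have "a = b \<or> a \<inter> b = {}"
          using quotient_disj[OF eq] S T \<open>a \<in> S\<close> \<open>b \<in> T\<close> by blast
        ultimately show "x \<in> \<Union>(S \<inter> T)" by auto
      qed
    qed auto
    then show ?thesis using S T by auto
  qed
  have union: "\<Union>K \<subseteq> topspace X // R \<and> openin X (\<Union>(\<Union>K))"
    if "\<forall>U\<in>K. U \<subseteq> topspace X // R \<and> openin X (\<Union>U)" for K
  proof -
    have "\<Union>(\<Union>K) = \<Union>(Union ` K)" by auto
    moreover have "openin X (\<Union>(Union ` K))"
      by (rule openin_Union) (use that in auto)
    ultimately show ?thesis using that by auto
  qed
  show "istopology (\<lambda>U. U \<subseteq> topspace X // R \<and> openin X (\<Union>U))"
    unfolding istopology_def using inter union by blast
qed

lemma topspace_quotient_topology: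
  assumes eq: "equiv (topspace X) R"
  shows "topspace (quotient_topology X R) = topspace X // R"
proof -
  have "openin (quotient_topology X R) (topspace X // R)"
    using openin_quotient_topology[OF eq] Union_quotient[OF eq] by simp
  moreover have "\<And>U. openin (quotient_topology X R) U \<Longrightarrow> U \<subseteq> topspace X // R"
    using openin_quotient_topology[OF eq] by simp
  ultimately show ?thesis
    unfolding topspace_def by blast
qed

text \<open>If every equivalence class is connected, the class map is a monotone quotient
  map, so the quotient is connected exactly when the original space is.\<close>

lemma connected_space_quotient_topology:
  assumes eq: "equiv (topspace X) R"
    and classes: "\<And>x. x \<in> topspace X \<Longrightarrow> connectedin X (R``{x})"
  shows "connected_space (quotient_topology X R) \<longleftrightarrow> connected_space X"
proof -
  define f where "f x = R``{x}" for x
  have preimage: "{x \<in> topspace X. f x \<in> U} = \<Union>U" if U: "U \<subseteq> topspace X // R" for U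
  proof
    show "{x \<in> topspace X. f x \<in> U} \<subseteq> \<Union>U"
      using eq unfolding f_def equiv_def refl_on_def by blast
    show "\<Union>U \<subseteq> {x \<in> topspace X. f x \<in> U}"
    proof
      fix x assume "x \<in> \<Union>U"
      then obtain c where c: "c \<in> U" "x \<in> c" by auto
      then obtain y where y: "c = R``{y}" "y \<in> topspace X" using U by (meson in_mono quotientE)
      have "x \<in> topspace X" using c y eq unfolding equiv_def refl_on_def by blast
      moreover have "R``{x} = R``{y}" using c y eq
        by (metis Image_singleton_iff equiv_class_eq_iff)
      ultimately show "x \<in> {x \<in> topspace X. f x \<in> U}" using c y f_def by auto
    qed
  qed
  have image: "f ` topspace X = topspace X // R"
    unfolding f_def quotient_def by auto
  have quot: "quotient_map X (quotient_topology X R) f"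
    unfolding quotient_map_def topspace_quotient_topology[OF eq]
    using image preimage by (simp add: openin_quotient_topology[OF eq])
  have mono: "monotone_map X (quotient_topology X R) f"
    unfolding monotone_map_def topspace_quotient_topology[OF eq]
  proof (intro conjI ballI)
    show "f ` topspace X \<subseteq> topspace X // R" using image by simp
    fix y assume "y \<in> topspace X // R"
    then have "{x \<in> topspace X. f x = y} = \<Union>{y}" using preimage[of "{y}"] by auto
    then show "connectedin X {x \<in> topspace X. f x = y}"
      using \<open>y \<in> topspace X // R\<close> classes by (auto elim: quotientE)
  qed
  show ?thesis
    using connected_space_quotient_map_image[OF quot]
      connected_space_monotone_quotient_map_preimage[OF mono quot] by blast
qed

section \<open>Configuration spaces modulo isometries\<close>

text \<open>All endpoints of the edges lie in the vertex set; this is what makes the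
  configuration space closed under rigid motions.\<close>

definition edges_within :: "'v set \<Rightarrow> 'e set \<Rightarrow> ('e \<Rightarrow> 'v \<times> 'v) \<Rightarrow> bool" where
  "edges_within V E ends \<longleftrightarrow> (\<forall>e\<in>E. fst (ends e) \<in> V \<and> snd (ends e) \<in> V)"

lemma ttspg_edges_within: "ttspg V E ends s t \<Longrightarrow> edges_within V E ends"
  unfolding edges_within_def by (induction rule: ttspg.induct) auto

definition rigid_motion :: "'v set \<Rightarrow> complex \<Rightarrow> complex \<Rightarrow> ('v \<Rightarrow> complex) \<Rightarrow> 'v \<Rightarrow> complex" where
  "rigid_motion V a b p = restrict (\<lambda>v. a * p v + b) V"

lemma conf_rigid_motion:
  assumes p: "p \<in> conf V E ends l" and a: "cmod a = 1" and en: "edges_within V E ends"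
  shows "rigid_motion V a b p \<in> conf V E ends l"
proof -
  have "cmod (a * p u + b - (a * p w + b)) = cmod (p u - p w)" for u w
  proof -
    have "a * p u + b - (a * p w + b) = a * (p u - p w)" by (simp add: algebra_simps)
    then show ?thesis by (simp add: norm_mult a)
  qed
  then show ?thesis using p en unfolding conf_def edges_within_def rigid_motion_def by auto
qed

lemma isom_rel_equiv:
  assumes en: "edges_within V E ends"
  shows "equiv (conf V E ends l) (isom_rel V (conf V E ends l))"
proof (rule equivI)
  let ?C = "conf V E ends l"
  show "isom_rel V ?C \<subseteq> ?C \<times> ?C" unfolding isom_rel_def by auto
  show "refl_on ?C (isom_rel V ?C)" unfolding refl_on_def
  proof
    fix p assume p: "p \<in> ?C"
    have "cmod (1::complex) = 1 \<and> (\<forall>v\<in>V. p v = 1 * p v + 0)" by simp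
    then show "(p, p) \<in> isom_rel V ?C" unfolding isom_rel_def using p by blast
  qed
  show "sym (isom_rel V ?C)" unfolding sym_def
  proof (intro allI impI)
    fix p q assume "(p, q) \<in> isom_rel V ?C"
    then obtain a b where h: "p \<in> ?C" "q \<in> ?C" "cmod a = 1" "\<forall>v\<in>V. q v = a * p v + b"
      unfolding isom_rel_def by auto
    have "a \<noteq> 0" using h(3) by auto
    then have "cmod (1/a) = 1 \<and> (\<forall>v\<in>V. p v = (1/a) * q v + (- b / a))"
      using h by (auto simp: norm_divide field_simps)
    then show "(q, p) \<in> isom_rel V ?C" unfolding isom_rel_def using h by blast
  qed
  show "trans (isom_rel V ?C)" unfolding trans_def
  proof (intro allI impI)
    fix p q r assume pq: "(p, q) \<in> isom_rel V ?C" and qr: "(q, r) \<in> isom_rel V ?C"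
    from pq obtain a b where g1: "p \<in> ?C" "cmod a = 1" "\<forall>v\<in>V. q v = a * p v + b"
      unfolding isom_rel_def by blast
    from qr obtain c d where g2: "r \<in> ?C" "cmod c = 1" "\<forall>v\<in>V. r v = c * q v + d"
      unfolding isom_rel_def by blast
    have "cmod (c * a) = 1 \<and> (\<forall>v\<in>V. r v = (c * a) * p v + (c * b + d))"
      using g1 g2 by (auto simp: norm_mult algebra_simps)
    then show "(p, r) \<in> isom_rel V ?C" unfolding isom_rel_def using g1 g2 by blast
  qed
qed

lemma isom_rel_class:
  assumes en: "edges_within V E ends" and p: "p \<in> conf V E ends l"
  shows "isom_rel V (conf V E ends l) `` {p} =
    (\<lambda>x. rigid_motion V (fst x) (snd x) p) ` (sphere 0 1 \<times> UNIV)"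
proof
  let ?C = "conf V E ends l"
  show "isom_rel V ?C `` {p} \<subseteq> (\<lambda>x. rigid_motion V (fst x) (snd x) p) ` (sphere 0 1 \<times> UNIV)"
  proof
    fix q assume "q \<in> isom_rel V ?C `` {p}"
    then obtain a b where h: "q \<in> ?C" "cmod a = 1" "\<forall>v\<in>V. q v = a * p v + b"
      unfolding isom_rel_def by auto
    have "q \<in> extensional V" using h(1) unfolding conf_def by (auto simp: PiE_def)
    then have "q = rigid_motion V a b p" using h(3)
      by (auto simp: extensional_def rigid_motion_def)
    then show "q \<in> (\<lambda>x. rigid_motion V (fst x) (snd x) p) ` (sphere 0 1 \<times> UNIV)"
      using h(2) by (auto intro!: image_eqI[of _ _ "(a, b)"])
  qed
  show "(\<lambda>x. rigid_motion V (fst x) (snd x) p) ` (sphere 0 1 \<times> UNIV) \<subseteq> isom_rel V ?C `` {p}"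
  proof clarsimp
    fix a b :: complex assume "cmod a = 1"
    then show "(p, rigid_motion V a b p) \<in> isom_rel V ?C"
      using conf_rigid_motion[OF p _ en] p unfolding isom_rel_def rigid_motion_def by auto
  qed
qed

lemma connected_isom_rel_class:
  assumes en: "edges_within V E ends" and p: "p \<in> conf V E ends l"
  shows "connected (isom_rel V (conf V E ends l) `` {p})"
  unfolding isom_rel_class[OF en p]
proof (rule connected_continuous_image)
  show "connected (sphere (0::complex) 1 \<times> (UNIV::complex set))"
    by (intro connected_Times connected_sphere connected_UNIV) auto
  show "continuous_on (sphere 0 1 \<times> UNIV) (\<lambda>x. rigid_motion V (fst x) (snd x) p)"
  proof (rule continuous_on_coordinatewise_then_product)
    fix v
    show "continuous_on (sphere 0 1 \<times> UNIV) (\<lambda>x. rigid_motion V (fst x) (snd x) p v)"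
      unfolding rigid_motion_def by (cases "v \<in> V") (auto intro!: continuous_intros)
  qed
qed

lemma topspace_moduli:
  assumes en: "edges_within V E ends"
  shows "topspace (moduli V E ends l) = conf V E ends l // isom_rel V (conf V E ends l)"
  unfolding moduli_def using isom_rel_equiv[OF en]
  by (simp add: topspace_quotient_topology)

lemma moduli_connected_iff_conf_connected:
  assumes en: "edges_within V E ends"
  shows "connected_space (moduli V E ends l) \<longleftrightarrow> connected (conf V E ends l)"
proof -
  let ?C = "conf V E ends l"
  have eq: "equiv (topspace (top_of_set ?C)) (isom_rel V ?C)"
    using isom_rel_equiv[OF en] by simp
  have "isom_rel V ?C `` {p} \<subseteq> ?C" for p
    unfolding isom_rel_def by auto
  then have "connectedin (top_of_set ?C) (isom_rel V ?C `` {p})"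
    if "p \<in> topspace (top_of_set ?C)" for p
    using that connected_isom_rel_class[OF en] by (simp add: connectedin_subtopology)
  then have "connected_space (moduli V E ends l) \<longleftrightarrow> connected_space (top_of_set ?C)"
    unfolding moduli_def by (rule connected_space_quotient_topology[OF eq])
  also have "\<dots> \<longleftrightarrow> connected ?C"
    by (metis connectedin_iff_connected connectedin_subtopology connectedin_topspace
        order_refl topspace_euclidean_subtopology)
  finally show ?thesis .
qed

section \<open>Gluing configurations at a cut vertex\<close>

lemma conf_restrict:
  assumes p: "p \<in> conf V E ends l" and sub: "V' \<subseteq> V" "E' \<subseteq> E"
    and en: "edges_within V' E' ends" and len: "\<forall>e\<in>E'. l' e = l e"
  shows "restrict p V' \<in> conf V' E' ends l'"
  using p sub en len unfolding conf_def edges_within_def by auto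

definition glue :: "'v set \<Rightarrow> 'v set \<Rightarrow> 'v \<Rightarrow> ('v \<Rightarrow> complex) \<Rightarrow> ('v \<Rightarrow> complex) \<Rightarrow> 'v \<Rightarrow> complex" where
  "glue V1 V2 c p1 p2 = (\<lambda>v. if v \<in> V2 then p2 v
     else if v \<in> V1 then p1 v + (p2 c - p1 c) else undefined)"

lemma glue_V1:
  assumes "V1 \<inter> V2 = {c}" and "v \<in> V1"
  shows "glue V1 V2 c p1 p2 v = p1 v + (p2 c - p1 c)"
proof -
  have "v \<in> V2 \<Longrightarrow> v = c" using assms by blast
  then show ?thesis using assms(2) unfolding glue_def by auto
qed

lemma glue_V2: "v \<in> V2 \<Longrightarrow> glue V1 V2 c p1 p2 v = p2 v"
  unfolding glue_def by simp

lemma continuous_on_glue: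
  "continuous_on UNIV (\<lambda>x. glue V1 V2 c (fst x) (snd x))"
proof (rule continuous_on_coordinatewise_then_product)
  fix v
  have fst_coord: "continuous_on UNIV (\<lambda>x::('v \<Rightarrow> complex) \<times> ('v \<Rightarrow> complex). fst x w)" for w
    using continuous_on_compose[OF continuous_on_fst[OF continuous_on_id]
        continuous_on_subset[OF continuous_on_product_coordinates[of w]]]
    by (simp add: o_def)
  have snd_coord: "continuous_on UNIV (\<lambda>x::('v \<Rightarrow> complex) \<times> ('v \<Rightarrow> complex). snd x w)" for w
    using continuous_on_compose[OF continuous_on_snd[OF continuous_on_id]
        continuous_on_subset[OF continuous_on_product_coordinates[of w]]]
    by (simp add: o_def)
  show "continuous_on UNIV (\<lambda>x. glue V1 V2 c (fst x) (snd x) v)"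
    unfolding glue_def
    by (cases "v \<in> V2"; cases "v \<in> V1") (auto intro!: continuous_intros fst_coord snd_coord)
qed

locale cut_vertex_gluing =
  fixes V1 V2 :: "'v set" and E1 E2 :: "'e set" and ends :: "'e \<Rightarrow> 'v \<times> 'v"
    and l1 l2 l :: "'e \<Rightarrow> real" and c :: 'v
  assumes cut: "V1 \<inter> V2 = {c}"
    and en1: "edges_within V1 E1 ends" and en2: "edges_within V2 E2 ends"
    and len1: "\<forall>e\<in>E1. l e = l1 e" and len2: "\<forall>e\<in>E2. l e = l2 e"
begin

abbreviation "C \<equiv> conf (V1 \<union> V2) (E1 \<union> E2) ends l"
abbreviation "C1 \<equiv> conf V1 E1 ends l1"
abbreviation "C2 \<equiv> conf V2 E2 ends l2"

lemma restrict_V1: "p \<in> C \<Longrightarrow> restrict p V1 \<in> C1"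
  by (rule conf_restrict) (use en1 len1 in auto)

lemma restrict_V2: "p \<in> C \<Longrightarrow> restrict p V2 \<in> C2"
  by (rule conf_restrict) (use en2 len2 in auto)

lemma glue_conf:
  assumes p1: "p1 \<in> C1" and p2: "p2 \<in> C2"
  shows "glue V1 V2 c p1 p2 \<in> C"
proof -
  have "glue V1 V2 c p1 p2 \<in> PiE (V1 \<union> V2) (\<lambda>_. UNIV)"
    unfolding glue_def PiE_def extensional_def by auto
  moreover have "cmod (glue V1 V2 c p1 p2 (fst (ends e)) - glue V1 V2 c p1 p2 (snd (ends e))) = l e"
    if e: "e \<in> E1 \<union> E2" for e
  proof (cases "e \<in> E1")
    case True
    then show ?thesis using p1 en1 len1 glue_V1[OF cut]
      unfolding conf_def edges_within_def by auto
  next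
    case False
    then have "e \<in> E2" using e by blast
    then have "fst (ends e) \<in> V2" "snd (ends e) \<in> V2" using en2 unfolding edges_within_def by auto
    then show ?thesis using \<open>e \<in> E2\<close> p2 len2 by (simp add: glue_V2 conf_def)
  qed
  ultimately show ?thesis unfolding conf_def by auto
qed

lemma glue_restrict:
  assumes "p \<in> C"
  shows "glue V1 V2 c (restrict p V1) (restrict p V2) = p"
proof -
  have "c \<in> V1" "c \<in> V2" using cut by auto
  then show ?thesis
    using assms unfolding glue_def conf_def PiE_def extensional_def by auto
qed

lemma glue_image: "(\<lambda>x. glue V1 V2 c (fst x) (snd x)) ` (C1 \<times> C2) = C"
proof
  show "(\<lambda>x. glue V1 V2 c (fst x) (snd x)) ` (C1 \<times> C2) \<subseteq> C"
    using glue_conf by auto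
  show "C \<subseteq> (\<lambda>x. glue V1 V2 c (fst x) (snd x)) ` (C1 \<times> C2)"
  proof
    fix p assume "p \<in> C"
    then show "p \<in> (\<lambda>x. glue V1 V2 c (fst x) (snd x)) ` (C1 \<times> C2)"
      using glue_restrict restrict_V1 restrict_V2
      by (auto intro!: image_eqI[of _ _ "(restrict p V1, restrict p V2)"])
  qed
qed

text \<open>Every configuration of G1 extends to one of G, provided G2 has some
  configuration: translate the latter to meet the former at c.\<close>

lemma restrict_V1_image:
  assumes "C2 \<noteq> {}"
  shows "(\<lambda>p. restrict p V1) ` C = C1"
proof
  show "(\<lambda>p. restrict p V1) ` C \<subseteq> C1" using restrict_V1 by blast
  show "C1 \<subseteq> (\<lambda>p. restrict p V1) ` C"
  proof
    fix p1 assume p1: "p1 \<in> C1"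
    obtain q where q: "q \<in> C2" using assms by blast
    define p2 where "p2 = rigid_motion V2 1 (p1 c - q c) q"
    have p2C: "p2 \<in> C2"
      unfolding p2_def by (rule conf_rigid_motion[OF q _ en2]) simp
    have "c \<in> V2" using cut by blast
    then have "p2 c = p1 c" by (simp add: p2_def rigid_motion_def)
    then have "restrict (glue V1 V2 c p1 p2) V1 = p1"
      using p1 glue_V1[OF cut] unfolding conf_def PiE_def extensional_def by fastforce
    then show "p1 \<in> (\<lambda>p. restrict p V1) ` C"
      using glue_conf[OF p1 p2C] by (metis image_eqI)
  qed
qed

lemma restrict_V2_image:
  assumes "C1 \<noteq> {}"
  shows "(\<lambda>p. restrict p V2) ` C = C2"
proof
  show "(\<lambda>p. restrict p V2) ` C \<subseteq> C2" using restrict_V2 by blast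
  show "C2 \<subseteq> (\<lambda>p. restrict p V2) ` C"
  proof
    fix p2 assume p2: "p2 \<in> C2"
    obtain p1 where p1: "p1 \<in> C1" using assms by blast
    have "restrict (glue V1 V2 c p1 p2) V2 = p2"
      using p2 glue_V2 unfolding conf_def PiE_def extensional_def by fastforce
    then show "p2 \<in> (\<lambda>p. restrict p V2) ` C"
      using glue_conf[OF p1 p2] by (metis image_eqI)
  qed
qed

theorem conf_connected_iff:
  assumes ne: "C \<noteq> {}"
  shows "connected C \<longleftrightarrow> connected C1 \<and> connected C2"
proof
  have restrict_cont: "continuous_on C (\<lambda>p::'v \<Rightarrow> complex. restrict p V)" for V
  proof (rule continuous_on_coordinatewise_then_product)
    fix v show "continuous_on C (\<lambda>p::'v \<Rightarrow> complex. restrict p V v)"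
      by (cases "v \<in> V") (auto intro: continuous_on_subset[OF continuous_on_product_coordinates])
  qed
  have "C1 \<noteq> {}" "C2 \<noteq> {}" using ne restrict_V1 restrict_V2 by blast+
  moreover assume "connected C"
  ultimately show "connected C1 \<and> connected C2"
    using connected_continuous_image[OF restrict_cont] restrict_V1_image restrict_V2_image
    by metis
next
  assume "connected C1 \<and> connected C2"
  then have "connected (C1 \<times> C2)" by (simp add: connected_Times)
  then show "connected C"
    using connected_continuous_image[OF continuous_on_subset[OF continuous_on_glue]] glue_image
    by (metis subset_UNIV)
qed

end

theorem mainTheorem11:
  fixes V1 V2 :: "'v set" and E1 E2 :: "'e set" and ends :: "'e \<Rightarrow> 'v \<times> 'v"
    and l1 l2 l :: "'e \<Rightarrow> real" and s1 t1 s2 t2 :: 'v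
  assumes "ttspg V1 E1 ends s1 t1" and "ttspg V2 E2 ends s2 t2"
    and "V1 \<inter> V2 = {s1}" and "t2 = s1" and "E1 \<inter> E2 = {}"
    and "\<forall>e\<in>E1. l1 e \<ge> 0" and "\<forall>e\<in>E2. l2 e \<ge> 0"
    and "\<forall>e\<in>E1. l e = l1 e" and "\<forall>e\<in>E2. l e = l2 e"
    and "topspace (moduli (V1 \<union> V2) (E1 \<union> E2) ends l) \<noteq> {}"
  shows "connected_space (moduli (V1 \<union> V2) (E1 \<union> E2) ends l) \<longleftrightarrow>
         connected_space (moduli V1 E1 ends l1) \<and> connected_space (moduli V2 E2 ends l2)"
proof -
  have en1: "edges_within V1 E1 ends" by (rule ttspg_edges_within[OF assms(1)])
  have en2: "edges_within V2 E2 ends" by (rule ttspg_edges_within[OF assms(2)])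
  have en: "edges_within (V1 \<union> V2) (E1 \<union> E2) ends"
    using en1 en2 unfolding edges_within_def by blast
  interpret cut_vertex_gluing V1 V2 E1 E2 ends l1 l2 l s1
    using assms(3,8,9) en1 en2 by unfold_locales
  have "C \<noteq> {}"
    using assms(10) topspace_moduli[OF en] by (auto simp: quotient_def)
  then show ?thesis
    using conf_connected_iff moduli_connected_iff_conf_connected[OF en]
      moduli_connected_iff_conf_connected[OF en1] moduli_connected_iff_conf_connected[OF en2]
    by simp
qed

end
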